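(* Fix $x$ and integers $K\ge 0$, $L\ge 1$. Let $q(z,\psi\mid x)=q(\psi\mid x)\,q(z\mid\psi,x)$ be a joint density with marginal $q(z\mid x)=\int q(z,\psi\mid x)\,d\psi$, and let $p(z,\zeta)$ be a joint density with marginal $p(z)=\int p(z,\zeta)\,d\zeta$. Let $\tau(\psi\mid x,z)$ be a conditional density in $\psi$ such that $\tau(\psi\mid x,z)=0$ implies $q(z,\psi\mid x)=0$, and let $\rho(\zeta\mid z)$ be a conditional density in $\zeta$. Then $$D_{KL}\big(q(z\mid x)\,\|\,p(z)\big)\le\mathbb{E}_{q(z,\psi_0\mid x)}\,\mathbb{E}_{\tau(\psi_{1:K}\mid x,z)}\,\mathbb{E}_{\rho(\zeta_{1:L}\mid z)}\left[\log\frac{\frac{1}{K+1}\sum_{k=0}^K\frac{q(z,\psi_k\mid x)}{\tau(\psi_k\mid x,z)}}{\frac{1}{L}\sum_{l=1}^L\frac{p(z,\zeta_l)}{\rho(\zeta_l\mid z)}}\right],$$ where $(z,\psi_0)\sim q(z,\psi\mid x)$, and given $z$, $\psi_1,\dots,\psi_K$ are i.i.d. from $\tau(\cdot\mid x,z)$ and $\zeta_1,\dots,\zeta_L$ are i.i.d. from $\rho(\cdot\mid z)$.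
   Context: $D_{KL}(q\|p)=\mathbb{E}_q\log(q/p)$ is the Kullback–Leibler divergence; all densities are with respect to fixed base measures. *)

theory Defs
  imports "HOL-Probability.Probability"
begin

definition elog_ratio :: "real \<Rightarrow> real \<Rightarrow> ereal" where
  "elog_ratio a b =
     (if 0 < a \<and> 0 < b then ereal (ln (a / b))
      else if 0 < a then \<infinity>
      else if 0 < b then - \<infinity>
      else 0)"

definition ext_expectation :: "'a measure \<Rightarrow> ('a \<Rightarrow> ereal) \<Rightarrow> ereal" where
  "ext_expectation M f =
     enn2ereal (\<integral>\<^sup>+ x. e2ennreal (f x) \<partial>M) - enn2ereal (\<integral>\<^sup>+ x. e2ennreal (- f x) \<partial>M)"

definition KL_div :: "'a measure \<Rightarrow> ('a \<Rightarrow> real) \<Rightarrow> ('a \<Rightarrow> real) \<Rightarrow> ereal" where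
  "KL_div M qd pd = ext_expectation (density M (\<lambda>z. ennreal (qd z))) (\<lambda>z. elog_ratio (qd z) (pd z))"

end

theory Submission
  imports Defs
begin

text \<open>
  Write \<open>A\<close>, \<open>B\<close> for the two importance-sampling estimates and \<open>Q\<close>, \<open>P\<close> for the marginals
  \<open>q(z|x)\<close>, \<open>p(z)\<close>. Since \<open>ln y \<ge> 1 - 1/y\<close>,
  \<open>ln (A/B) - ln (Q/P) = ln (A/Q) + ln (P/B) \<ge> 2 - Q/A - B/P\<close>,
  so it suffices that \<open>Q/A\<close> and \<open>B/P\<close> have conditional expectation at most 1 given \<open>z\<close>.
  For \<open>B/P\<close> this is the unbiasedness of importance sampling. For \<open>Q/A\<close>: given \<open>z\<close>, the samples
  \<open>psi_0, ..., psi_K\<close> have density \<open>Q\<^sup>-\<^sup>1 \<Prod>\<^sub>k tau(psi_k) \<cdot> (q/tau)(psi_0)\<close>, so \<open>E[Q/A | z]\<close>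
  is \<open>K + 1\<close> times the \<open>tau\<close>-expectation of the self-normalised weight of \<open>psi_0\<close>; by
  exchangeability all \<open>K + 1\<close> weights have the same expectation, and they sum to at most 1.
  The logarithms are extended reals, so one works with positive and negative parts; the negative
  parts are integrable since \<open>(-ln (A/B))\<^sup>+ \<le> B/A\<close> and \<open>Q (-ln (Q/P))\<^sup>+ \<le> P\<close>.
\<close>

lemma one_minus_inverse_le_ln: "0 < x \<Longrightarrow> 1 - 1 / x \<le> ln (x::real)"
  using ln_le_minus_one[of "1 / x"] by (simp add: ln_div)

lemma e2ennreal_neg_elog_ratio_le:
  fixes A B :: real
  assumes "0 < A" "0 \<le> B"
  shows "e2ennreal (- elog_ratio A B) \<le> ennreal (B / A)"
proof (cases "B = 0")
  case True
  then show ?thesis using assms by (simp add: elog_ratio_def e2ennreal_neg)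
next
  case False
  then have "- ln (A / B) \<le> B / A"
    using one_minus_inverse_le_ln[of "A / B"] assms by simp
  then show ?thesis using assms False by (simp add: elog_ratio_def ennreal_leI)
qed

lemma mult_e2ennreal_neg_elog_ratio_le:
  fixes Q P :: real
  assumes "0 \<le> Q" "0 \<le> P"
  shows "ennreal Q * e2ennreal (- elog_ratio Q P) \<le> ennreal P"
proof (cases "0 < Q \<and> 0 < P")
  case True
  then have "Q * (- ln (Q / P)) \<le> P"
    using one_minus_inverse_le_ln[of "Q / P"] by (simp add: field_simps)
  with True show ?thesis by (simp add: elog_ratio_def ennreal_mult'[symmetric] ennreal_leI)
next
  case False
  with assms show ?thesis by (auto simp: elog_ratio_def e2ennreal_neg)
qed

text \<open>This is \<open>ln (A/B) - ln (Q/P) \<ge> 2 - Q/A - B/P\<close>, written with positive and negative parts.\<close>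
lemma elog_ratio_diff_slack:
  fixes A B Q P :: real
  assumes A: "0 < A" and Q: "0 < Q" and B: "0 \<le> B" and P: "0 \<le> P"
  shows "e2ennreal (elog_ratio Q P) + e2ennreal (- elog_ratio A B) + 2
     \<le> e2ennreal (elog_ratio A B) + e2ennreal (- elog_ratio Q P) + (ennreal (Q / A) + ennreal B / ennreal P)"
proof (cases "0 < B \<and> 0 < P")
  case True
  define a where "a = ln (A / B)"
  define c where "c = ln (Q / P)"
  have "a - c = ln (A / Q) + ln (P / B)"
    using A Q True by (simp add: a_def c_def ln_div)
  then have "2 - Q / A - B / P \<le> a - c"
    using one_minus_inverse_le_ln[of "A / Q"] one_minus_inverse_le_ln[of "P / B"] A Q True by simp
  then have "max c 0 + max (- a) 0 + 2 \<le> max a 0 + max (- c) 0 + (Q / A + B / P)"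
    by linarith
  then have "ennreal (max c 0 + max (- a) 0 + 2) \<le> ennreal (max a 0 + max (- c) 0 + (Q / A + B / P))"
    by (rule ennreal_leI)
  then show ?thesis
    using A Q True by (simp add: a_def c_def elog_ratio_def ennreal_plus divide_ennreal)
next
  case False
  with A B P have "elog_ratio A B = \<infinity> \<or> ennreal B / ennreal P = \<infinity>"
    by (auto simp: elog_ratio_def divide_ennreal_def ennreal_mult_top)
  then show ?thesis by auto
qed

lemma sum_mult_divide_sum_le:
  fixes a :: "'i \<Rightarrow> real"
  assumes "0 \<le> c" "\<And>j. j \<in> I \<Longrightarrow> 0 \<le> a j"
  shows "(\<Sum>j\<in>I. c * a j / (\<Sum>k\<in>I. a k)) \<le> c"
proof -
  have "(\<Sum>j\<in>I. c * a j / (\<Sum>k\<in>I. a k)) = c * (\<Sum>k\<in>I. a k) / (\<Sum>k\<in>I. a k)"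
    by (simp only: sum_divide_distrib[symmetric] sum_distrib_left[symmetric])
  then show ?thesis
    using assms(1) by (cases "(\<Sum>k\<in>I. a k) = 0") auto
qed

lemma ennreal_divide_eq_one_divide_mult: "0 \<le> b \<Longrightarrow> ennreal (b / a) = ennreal (1 / a) * ennreal b"
  using ennreal_mult''[of b "1 / a"] by (simp add: mult.commute)

lemma ext_expectation_distr:
  assumes [measurable]: "T \<in> measurable M N" "g \<in> borel_measurable N"
  shows "ext_expectation (distr M N T) g = ext_expectation M (\<lambda>x. g (T x))"
  unfolding ext_expectation_def by (subst (1 2) nn_integral_distr) auto

lemma enn2ereal_diff_le_diff:
  fixes a b c d :: ennreal
  assumes "c \<noteq> \<infinity>" "d \<noteq> \<infinity>" "a + d \<le> b + c"
  shows "enn2ereal a - enn2ereal c \<le> enn2ereal b - enn2ereal d"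
proof -
  obtain c' d' where cd: "c = ennreal c'" "d = ennreal d'" "0 \<le> c'" "0 \<le> d'"
    using assms(1,2) by (cases c; cases d) auto
  show ?thesis
  proof (cases b)
    case (real b')
    then have "a \<noteq> \<infinity>" using assms(3) cd by (auto simp: top_unique)
    then obtain a' where "a = ennreal a'" "0 \<le> a'" by (cases a) auto
    with assms(3) real cd show ?thesis
      by (simp add: ennreal_plus[symmetric] del: ennreal_plus)
  qed (use cd in simp)
qed

text \<open>The pointwise hypothesis is \<open>g - f \<le> U - W\<close>, rearranged so that it makes sense in \<open>ennreal\<close>.\<close>
lemma ext_expectation_le_of_slack:
  fixes f g :: "'a \<Rightarrow> ereal" and U W :: "'a \<Rightarrow> ennreal"
  assumes [measurable]: "f \<in> borel_measurable M" "g \<in> borel_measurable M"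
    "U \<in> borel_measurable M" "W \<in> borel_measurable M"
    and slack: "AE x in M. e2ennreal (g x) + e2ennreal (- f x) + W x
                  \<le> e2ennreal (f x) + e2ennreal (- g x) + U x"
    and UW: "(\<integral>\<^sup>+x. U x \<partial>M) \<le> (\<integral>\<^sup>+x. W x \<partial>M)" "(\<integral>\<^sup>+x. W x \<partial>M) \<noteq> \<infinity>"
    and neg_f: "(\<integral>\<^sup>+x. e2ennreal (- f x) \<partial>M) \<noteq> \<infinity>"
    and neg_g: "(\<integral>\<^sup>+x. e2ennreal (- g x) \<partial>M) \<noteq> \<infinity>"
  shows "ext_expectation M g \<le> ext_expectation M f"
proof -
  have [measurable]: "(\<lambda>x. e2ennreal (f x)) \<in> borel_measurable M" "(\<lambda>x. e2ennreal (- f x)) \<in> borel_measurable M"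
    "(\<lambda>x. e2ennreal (g x)) \<in> borel_measurable M" "(\<lambda>x. e2ennreal (- g x)) \<in> borel_measurable M"
    by measurable
  let ?I = "\<lambda>h. \<integral>\<^sup>+x. h x \<partial>M"
  have "?I (\<lambda>x. e2ennreal (g x)) + ?I (\<lambda>x. e2ennreal (- f x)) + ?I W
      = ?I (\<lambda>x. e2ennreal (g x) + e2ennreal (- f x) + W x)"
    by (simp add: nn_integral_add)
  also have "\<dots> \<le> ?I (\<lambda>x. e2ennreal (f x) + e2ennreal (- g x) + U x)"
    by (rule nn_integral_mono_AE[OF slack])
  also have "\<dots> = ?I (\<lambda>x. e2ennreal (f x)) + ?I (\<lambda>x. e2ennreal (- g x)) + ?I U"
    by (simp add: nn_integral_add)
  also have "\<dots> \<le> ?I (\<lambda>x. e2ennreal (f x)) + ?I (\<lambda>x. e2ennreal (- g x)) + ?I W"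
    using UW(1) by (rule add_left_mono)
  finally have "?I W + (?I (\<lambda>x. e2ennreal (g x)) + ?I (\<lambda>x. e2ennreal (- f x)))
      \<le> ?I W + (?I (\<lambda>x. e2ennreal (f x)) + ?I (\<lambda>x. e2ennreal (- g x)))"
    by (simp only: ac_simps)
  then have "?I (\<lambda>x. e2ennreal (g x)) + ?I (\<lambda>x. e2ennreal (- f x))
      \<le> ?I (\<lambda>x. e2ennreal (f x)) + ?I (\<lambda>x. e2ennreal (- g x))"
    using UW(2) by (simp add: ennreal_add_left_cancel_le)
  then show ?thesis
    unfolding ext_expectation_def by (rule enn2ereal_diff_le_diff[OF neg_g neg_f])
qed

lemma measurable_PiM_comp_permutes:
  assumes "\<sigma> permutes I"
  shows "(\<lambda>x. x \<circ> \<sigma>) \<in> measurable (PiM I (\<lambda>_. M)) (PiM I (\<lambda>_. M))"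
  using assms by (intro measurable_PiM_single')
    (auto simp: space_PiM PiE_iff extensional_def permutes_not_in permutes_in_image)

lemma vimage_comp_permutes_PiE:
  assumes "\<sigma> permutes I" "\<And>i. i \<in> I \<Longrightarrow> A i \<subseteq> space M"
  shows "(\<lambda>x. x \<circ> \<sigma>) -` PiE I A \<inter> space (PiM I (\<lambda>_. M)) = PiE I (\<lambda>i. A (inv \<sigma> i))"
proof (intro set_eqI iffI)
  have \<sigma>: "\<And>i. \<sigma> (inv \<sigma> i) = i" "\<And>i. inv \<sigma> (\<sigma> i) = i" "\<And>i. i \<in> I \<Longrightarrow> \<sigma> i \<in> I"
    "\<And>i. i \<in> I \<Longrightarrow> inv \<sigma> i \<in> I" "\<And>i. i \<notin> I \<Longrightarrow> \<sigma> i = i"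
    using assms(1) permutes_inv[OF assms(1)] by (auto simp: permutes_inverses permutes_in_image permutes_not_in)
  {
    fix x assume "x \<in> (\<lambda>x. x \<circ> \<sigma>) -` PiE I A \<inter> space (PiM I (\<lambda>_. M))"
    then have x: "\<And>i. i \<in> I \<Longrightarrow> x (\<sigma> i) \<in> A i" "x \<in> extensional I"
      by (auto simp: space_PiM PiE_iff)
    have "x i \<in> A (inv \<sigma> i)" if "i \<in> I" for i
      using x(1)[OF \<sigma>(4)[OF that]] by (simp add: \<sigma>(1))
    with x(2) show "x \<in> PiE I (\<lambda>i. A (inv \<sigma> i))"
      by (simp add: PiE_iff)
  next
    fix x assume x: "x \<in> PiE I (\<lambda>i. A (inv \<sigma> i))"
    then have "x \<in> space (PiM I (\<lambda>_. M))"
      using assms(2) \<sigma>(4) by (fastforce simp: space_PiM PiE_iff)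
    moreover have "x (\<sigma> i) \<in> A i" if "i \<in> I" for i
      using PiE_mem[OF x \<sigma>(3)[OF that]] by (simp add: \<sigma>(2))
    moreover have "x \<circ> \<sigma> \<in> extensional I"
      using x \<sigma>(5) by (auto simp: PiE_iff extensional_def)
    ultimately show "x \<in> (\<lambda>x. x \<circ> \<sigma>) -` PiE I A \<inter> space (PiM I (\<lambda>_. M))"
      by (simp add: PiE_iff)
  }
qed

lemma distr_PiM_permutes:
  assumes "sigma_finite_measure M" "finite I" "\<sigma> permutes I"
  shows "distr (PiM I (\<lambda>_. M)) (PiM I (\<lambda>_. M)) (\<lambda>x. x \<circ> \<sigma>) = PiM I (\<lambda>_. M)"
proof -
  interpret product_sigma_finite "\<lambda>_. M"
    using assms(1) by (simp add: product_sigma_finite_def)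
  show ?thesis
  proof (rule PiM_eqI[OF assms(2)])
    fix A assume A: "\<And>i. i \<in> I \<Longrightarrow> A i \<in> sets M"
    have inv_\<sigma>: "\<And>i. i \<in> I \<Longrightarrow> inv \<sigma> i \<in> I"
      using permutes_inv[OF assms(3)] by (simp add: permutes_in_image)
    have A_space: "\<And>i. i \<in> I \<Longrightarrow> A i \<subseteq> space M"
      using A by (simp add: sets.sets_into_space)
    have "emeasure (distr (PiM I (\<lambda>_. M)) (PiM I (\<lambda>_. M)) (\<lambda>x. x \<circ> \<sigma>)) (PiE I A)
        = (\<Prod>i\<in>I. emeasure M (A (inv \<sigma> i)))"
      using A inv_\<sigma> assms(2) measurable_PiM_comp_permutes[OF assms(3), of M]
        vimage_comp_permutes_PiE[OF assms(3) A_space]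
      by (simp add: emeasure_distr sets_PiM_I_finite emeasure_PiM)
    also have "\<dots> = (\<Prod>i\<in>I. emeasure M (A i))"
      using prod.permute[OF permutes_inv[OF assms(3)], of "\<lambda>i. emeasure M (A i)"] by (simp add: comp_def)
    finally show "emeasure (distr (PiM I (\<lambda>_. M)) (PiM I (\<lambda>_. M)) (\<lambda>x. x \<circ> \<sigma>)) (PiE I A)
        = (\<Prod>i\<in>I. emeasure M (A i))" .
  qed simp
qed

lemma nn_integral_PiM_permutes:
  assumes "sigma_finite_measure M" "finite I" "\<sigma> permutes I"
    and "F \<in> borel_measurable (PiM I (\<lambda>_. M))"
  shows "(\<integral>\<^sup>+x. F (x \<circ> \<sigma>) \<partial>PiM I (\<lambda>_. M)) = (\<integral>\<^sup>+x. F x \<partial>PiM I (\<lambda>_. M))"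
  by (subst (2) distr_PiM_permutes[OF assms(1-3), symmetric])
    (simp add: nn_integral_distr assms(4) measurable_PiM_comp_permutes[OF assms(3)])

lemma nn_integral_PiM_prod_density:
  assumes "sigma_finite_measure M" "finite I"
    and [measurable]: "r \<in> borel_measurable M"
    and "\<And>y. 0 \<le> r y" "(\<integral>\<^sup>+y. ennreal (r y) \<partial>M) = 1"
  shows "(\<integral>\<^sup>+x. ennreal (\<Prod>i\<in>I. r (x i)) \<partial>PiM I (\<lambda>_. M)) = 1"
proof -
  interpret product_sigma_finite "\<lambda>_. M"
    using assms(1) by (simp add: product_sigma_finite_def)
  have "(\<integral>\<^sup>+x. ennreal (\<Prod>i\<in>I. r (x i)) \<partial>PiM I (\<lambda>_. M)) = (\<integral>\<^sup>+x. (\<Prod>i\<in>I. ennreal (r (x i))) \<partial>PiM I (\<lambda>_. M))"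
    using assms(4) by (simp add: prod_ennreal)
  also have "\<dots> = 1"
    using assms(2,5) by (subst product_nn_integral_prod) auto
  finally show ?thesis .
qed

lemma nn_integral_PiM_prod_density_component:
  assumes "sigma_finite_measure M" "finite I" "l \<in> I"
    and [measurable]: "r \<in> borel_measurable M" "g \<in> borel_measurable M"
    and "\<And>y. 0 \<le> r y" "(\<integral>\<^sup>+y. ennreal (r y) \<partial>M) = 1"
  shows "(\<integral>\<^sup>+x. ennreal (\<Prod>i\<in>I. r (x i)) * g (x l) \<partial>PiM I (\<lambda>_. M)) = (\<integral>\<^sup>+y. ennreal (r y) * g y \<partial>M)"
proof -
  interpret product_sigma_finite "\<lambda>_. M"
    using assms(1) by (simp add: product_sigma_finite_def)
  define f where "f i = (\<lambda>y. if i = l then ennreal (r y) * g y else ennreal (r y))" for i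
  have [measurable]: "f i \<in> borel_measurable M" for i
    unfolding f_def by measurable
  have "ennreal (\<Prod>i\<in>I. r (x i)) * g (x l) = (\<Prod>i\<in>I. f i (x i))" for x
  proof -
    have "ennreal (\<Prod>i\<in>I. r (x i)) = ennreal (r (x l)) * (\<Prod>i\<in>I - {l}. ennreal (r (x i)))"
      using assms(2,3,6) by (simp add: prod.remove[of I l] prod_ennreal ennreal_mult prod_nonneg)
    moreover have "(\<Prod>i\<in>I. f i (x i)) = f l (x l) * (\<Prod>i\<in>I - {l}. f i (x i))"
      using assms(2,3) by (rule prod.remove)
    moreover have "(\<Prod>i\<in>I - {l}. f i (x i)) = (\<Prod>i\<in>I - {l}. ennreal (r (x i)))"
      by (rule prod.cong) (auto simp: f_def)
    ultimately show ?thesis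
      by (simp add: f_def ac_simps)
  qed
  then have "(\<integral>\<^sup>+x. ennreal (\<Prod>i\<in>I. r (x i)) * g (x l) \<partial>PiM I (\<lambda>_. M)) = (\<Prod>i\<in>I. integral\<^sup>N M (f i))"
    using assms(2) by (subst product_nn_integral_prod[symmetric]) auto
  also have "\<dots> = integral\<^sup>N M (f l) * (\<Prod>i\<in>I - {l}. integral\<^sup>N M (f i))"
    using assms(2,3) by (rule prod.remove)
  also have "(\<Prod>i\<in>I - {l}. integral\<^sup>N M (f i)) = 1"
    using assms(7) by (intro prod.neutral) (simp add: f_def)
  finally show ?thesis
    by (simp add: f_def)
qed

text \<open>Only an inequality: \<open>p y / r y = 0\<close> wherever \<open>r y = 0\<close>.\<close>
lemma nn_integral_PiM_importance_average_le:
  assumes "sigma_finite_measure M" "finite I" "I \<noteq> {}"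
    and [measurable]: "r \<in> borel_measurable M" "p \<in> borel_measurable M"
    and r: "\<And>y. 0 \<le> r y" "(\<integral>\<^sup>+y. ennreal (r y) \<partial>M) = 1" and p: "\<And>y. 0 \<le> p y"
  shows "(\<integral>\<^sup>+x. ennreal (\<Prod>i\<in>I. r (x i)) * ennreal ((\<Sum>i\<in>I. p (x i) / r (x i)) / card I) \<partial>PiM I (\<lambda>_. M))
    \<le> (\<integral>\<^sup>+y. ennreal (p y) \<partial>M)"
proof -
  let ?n = "ennreal (card I)"
  have n: "0 < card I"
    using assms(2,3) by (simp add: card_gt_0_iff)
  have split: "ennreal (\<Prod>i\<in>I. r (x i)) * ennreal ((\<Sum>i\<in>I. p (x i) / r (x i)) / card I)
      = (\<Sum>l\<in>I. ennreal (\<Prod>i\<in>I. r (x i)) * ennreal (p (x l) / r (x l))) / ?n" for x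
    using n r p by (simp add: sum_distrib_left[symmetric] divide_ennreal[symmetric] ennreal_times_divide
        sum_nonneg divide_nonneg_nonneg)
  have "(\<integral>\<^sup>+x. ennreal (\<Prod>i\<in>I. r (x i)) * ennreal ((\<Sum>i\<in>I. p (x i) / r (x i)) / card I) \<partial>PiM I (\<lambda>_. M))
      = (\<Sum>l\<in>I. \<integral>\<^sup>+x. ennreal (\<Prod>i\<in>I. r (x i)) * ennreal (p (x l) / r (x l)) \<partial>PiM I (\<lambda>_. M)) / ?n"
    unfolding split by (simp add: nn_integral_divide nn_integral_sum)
  also have "\<dots> = (\<Sum>l\<in>I. \<integral>\<^sup>+y. ennreal (r y) * ennreal (p y / r y) \<partial>M) / ?n"
    using assms(1,2) r
    by (intro arg_cong[where f="\<lambda>s. s / ?n"] sum.cong refl nn_integral_PiM_prod_density_component) auto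
  also have "\<dots> \<le> (\<Sum>l\<in>I. \<integral>\<^sup>+y. ennreal (p y) \<partial>M) / ?n"
  proof (intro divide_right_mono_ennreal sum_mono nn_integral_mono)
    fix y
    have "r y * (p y / r y) \<le> p y"
      using p by (cases "r y = 0") auto
    then show "ennreal (r y) * ennreal (p y / r y) \<le> ennreal (p y)"
      using r(1)[of y] p[of y] by (subst ennreal_mult[symmetric]) (auto intro: ennreal_leI)
  qed
  also have "\<dots> = (\<integral>\<^sup>+y. ennreal (p y) \<partial>M)"
    using n by (simp add: ennreal_of_nat_eq_real_of_nat[symmetric] mult.commute[of "of_nat _"] ennreal_mult_divide_eq)
  finally show ?thesis .
qed

text \<open>The \<open>card I\<close> self-normalised weights sum to at most the product density, and
  swapping coordinates \<open>i\<close> and \<open>j\<close> shows that they all have the same integral.\<close>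
lemma nn_integral_PiM_self_normalized_weight_le:
  assumes "sigma_finite_measure M" "finite I" "i \<in> I"
    and [measurable]: "t \<in> borel_measurable M" "w \<in> borel_measurable M"
    and t: "\<And>y. 0 \<le> t y" "(\<integral>\<^sup>+y. ennreal (t y) \<partial>M) = 1" and w: "\<And>y. 0 \<le> w y"
  shows "of_nat (card I) * (\<integral>\<^sup>+x. ennreal ((\<Prod>j\<in>I. t (x j)) * (w (x i) / t (x i)) / (\<Sum>j\<in>I. w (x j) / t (x j)))
           \<partial>PiM I (\<lambda>_. M)) \<le> 1"
proof -
  let ?P = "PiM I (\<lambda>_. M)"
  define T where "T x = (\<Prod>j\<in>I. t (x j))" for x :: "'b \<Rightarrow> 'a"
  define S where "S x = (\<Sum>j\<in>I. w (x j) / t (x j))" for x :: "'b \<Rightarrow> 'a"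
  define H where "H j = (\<lambda>x. ennreal (T x * (w (x j) / t (x j)) / S x))" for j
  have [measurable]: "H j \<in> borel_measurable ?P" if "j \<in> I" for j
    unfolding H_def T_def S_def using that by measurable
  have H_sum: "(\<Sum>j\<in>I. H j x) \<le> ennreal (T x)" for x
  proof -
    have nonneg: "0 \<le> T x" "0 \<le> S x" "\<And>j. 0 \<le> w (x j) / t (x j)"
      unfolding T_def S_def using t w by (auto intro!: prod_nonneg sum_nonneg divide_nonneg_nonneg)
    then have "(\<Sum>j\<in>I. H j x) = ennreal (\<Sum>j\<in>I. T x * (w (x j) / t (x j)) / S x)"
      unfolding H_def by (intro sum_ennreal divide_nonneg_nonneg mult_nonneg_nonneg t w)
    also have "\<dots> \<le> ennreal (T x)"
      unfolding S_def by (intro ennreal_leI sum_mult_divide_sum_le) (use nonneg in auto)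
    finally show ?thesis .
  qed
  have "(\<Sum>j\<in>I. integral\<^sup>N ?P (H j)) = (\<integral>\<^sup>+x. (\<Sum>j\<in>I. H j x) \<partial>?P)"
    by (rule nn_integral_sum[symmetric]) simp
  also have "\<dots> \<le> (\<integral>\<^sup>+x. ennreal (T x) \<partial>?P)"
    by (rule nn_integral_mono) (rule H_sum)
  also have "\<dots> = 1"
    unfolding T_def using assms(1,2,4) t by (rule nn_integral_PiM_prod_density)
  finally have sum_le: "(\<Sum>j\<in>I. integral\<^sup>N ?P (H j)) \<le> 1" .
  have exchange: "integral\<^sup>N ?P (H i) = integral\<^sup>N ?P (H j)" if j: "j \<in> I" for j
  proof -
    have \<sigma>: "Transposition.transpose i j permutes I"
      using assms(3) j by (rule permutes_swap_id)
    have "H i (x \<circ> Transposition.transpose i j) = H j x" for x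
      unfolding H_def T_def S_def
      using prod.permute[OF \<sigma>, of "\<lambda>k. t (x k)"] sum.permute[OF \<sigma>, of "\<lambda>k. w (x k) / t (x k)"]
      by (simp add: comp_def)
    then show ?thesis
      using nn_integral_PiM_permutes[OF assms(1,2) \<sigma>, of "H i"] assms(3) by simp
  qed
  have "of_nat (card I) * integral\<^sup>N ?P (H i) = (\<Sum>j\<in>I. integral\<^sup>N ?P (H i))"
    by simp
  also have "\<dots> = (\<Sum>j\<in>I. integral\<^sup>N ?P (H j))"
    by (rule sum.cong[OF refl exchange])
  finally have "of_nat (card I) * integral\<^sup>N ?P (H i) \<le> 1"
    using sum_le by simp
  then show ?thesis
    by (simp only: H_def T_def S_def)
qed

lemma nn_integral_PiM_self_normalized_le:
  assumes "sigma_finite_measure M" "finite I" "i \<in> I"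
    and [measurable]: "t \<in> borel_measurable M" "w \<in> borel_measurable M"
    and t: "\<And>y. 0 \<le> t y" "(\<integral>\<^sup>+y. ennreal (t y) \<partial>M) = 1" and w: "\<And>y. 0 \<le> w y"
    and supp: "\<And>y. y \<in> space M \<Longrightarrow> t y = 0 \<Longrightarrow> w y = 0"
  shows "(\<integral>\<^sup>+x. ennreal (w (x i) * (\<Prod>j\<in>I - {i}. t (x j)) / ((\<Sum>j\<in>I. w (x j) / t (x j)) / card I))
           \<partial>PiM I (\<lambda>_. M)) \<le> 1"
proof -
  let ?P = "PiM I (\<lambda>_. M)"
  let ?W = "\<lambda>x. (\<Prod>j\<in>I. t (x j)) * (w (x i) / t (x i)) / (\<Sum>j\<in>I. w (x j) / t (x j))"
  have "ennreal (w (x i) * (\<Prod>j\<in>I - {i}. t (x j)) / ((\<Sum>j\<in>I. w (x j) / t (x j)) / card I))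
      = of_nat (card I) * ennreal (?W x)" if "x \<in> space ?P" for x
  proof -
    have "x i \<in> space M"
      using that assms(3) by (auto simp: space_PiM)
    then have "w (x i) * (\<Prod>j\<in>I - {i}. t (x j)) = (\<Prod>j\<in>I. t (x j)) * (w (x i) / t (x i))"
      using supp[of "x i"] assms(2,3) by (auto simp: prod.remove[of I i])
    then have eq: "w (x i) * (\<Prod>j\<in>I - {i}. t (x j)) / ((\<Sum>j\<in>I. w (x j) / t (x j)) / card I)
        = real (card I) * ?W x"
      by (simp add: mult_ac)
    have "0 \<le> ?W x"
      using t w by (simp add: prod_nonneg sum_nonneg divide_nonneg_nonneg)
    then show ?thesis
      unfolding eq ennreal_of_nat_eq_real_of_nat by (intro ennreal_mult) simp_all
  qed
  then have "(\<integral>\<^sup>+x. ennreal (w (x i) * (\<Prod>j\<in>I - {i}. t (x j)) / ((\<Sum>j\<in>I. w (x j) / t (x j)) / card I)) \<partial>?P)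
      = (\<integral>\<^sup>+x. of_nat (card I) * ennreal (?W x) \<partial>?P)"
    by (rule nn_integral_cong)
  also have "\<dots> = of_nat (card I) * (\<integral>\<^sup>+x. ennreal (?W x) \<partial>?P)"
    using assms(3) by (intro nn_integral_cmult) measurable
  also have "\<dots> \<le> 1"
    using assms(1-8) by (rule nn_integral_PiM_self_normalized_weight_le)
  finally show ?thesis .
qed

locale kl_marginal_bound =
  fixes MZ :: "'z measure" and MP :: "'psi measure" and MR :: "'zeta measure"
    and q :: "'z \<Rightarrow> 'psi \<Rightarrow> real"
    and p :: "'z \<Rightarrow> 'zeta \<Rightarrow> real"
    and tau :: "'z \<Rightarrow> 'psi \<Rightarrow> real"
    and rho :: "'z \<Rightarrow> 'zeta \<Rightarrow> real"
    and K L :: nat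
  assumes sfP: "sigma_finite_measure MP"
    and sfR: "sigma_finite_measure MR"
    and L_pos: "1 \<le> L"
    and q_meas[measurable]: "(\<lambda>(z, \<psi>). q z \<psi>) \<in> borel_measurable (MZ \<Otimes>\<^sub>M MP)"
    and q_nonneg: "\<And>z \<psi>. 0 \<le> q z \<psi>"
    and q_norm: "(\<integral>\<^sup>+ w. ennreal (q (fst w) (snd w)) \<partial>(MZ \<Otimes>\<^sub>M MP)) = 1"
    and p_meas[measurable]: "(\<lambda>(z, \<zeta>). p z \<zeta>) \<in> borel_measurable (MZ \<Otimes>\<^sub>M MR)"
    and p_nonneg: "\<And>z \<zeta>. 0 \<le> p z \<zeta>"
    and p_norm: "(\<integral>\<^sup>+ w. ennreal (p (fst w) (snd w)) \<partial>(MZ \<Otimes>\<^sub>M MR)) = 1"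
    and tau_meas[measurable]: "(\<lambda>(z, \<psi>). tau z \<psi>) \<in> borel_measurable (MZ \<Otimes>\<^sub>M MP)"
    and tau_nonneg: "\<And>z \<psi>. 0 \<le> tau z \<psi>"
    and tau_norm: "\<And>z. z \<in> space MZ \<Longrightarrow> (\<integral>\<^sup>+ \<psi>. ennreal (tau z \<psi>) \<partial>MP) = 1"
    and tau_supp: "\<And>z \<psi>. z \<in> space MZ \<Longrightarrow> \<psi> \<in> space MP \<Longrightarrow> tau z \<psi> = 0 \<Longrightarrow> q z \<psi> = 0"
    and rho_meas[measurable]: "(\<lambda>(z, \<zeta>). rho z \<zeta>) \<in> borel_measurable (MZ \<Otimes>\<^sub>M MR)"
    and rho_nonneg: "\<And>z \<zeta>. 0 \<le> rho z \<zeta>"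
    and rho_norm: "\<And>z. z \<in> space MZ \<Longrightarrow> (\<integral>\<^sup>+ \<zeta>. ennreal (rho z \<zeta>) \<partial>MR) = 1"
begin

abbreviation "MPs \<equiv> \<Pi>\<^sub>M k\<in>{1..K}. MP"
abbreviation "MRs \<equiv> \<Pi>\<^sub>M l\<in>{1..L}. MR"
abbreviation "\<Omega> \<equiv> MZ \<Otimes>\<^sub>M MP \<Otimes>\<^sub>M MPs \<Otimes>\<^sub>M MRs"

definition q_marginal :: "'z \<Rightarrow> ennreal" where
  "q_marginal z = (\<integral>\<^sup>+\<psi>. ennreal (q z \<psi>) \<partial>MP)"

definition p_marginal :: "'z \<Rightarrow> ennreal" where
  "p_marginal z = (\<integral>\<^sup>+\<zeta>. ennreal (p z \<zeta>) \<partial>MR)"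

definition q_estimate :: "'z \<Rightarrow> 'psi \<Rightarrow> (nat \<Rightarrow> 'psi) \<Rightarrow> real" where
  "q_estimate z \<psi>0 \<psi>s = (\<Sum>k\<in>{0..K}. q z ((\<psi>s(0 := \<psi>0)) k) / tau z ((\<psi>s(0 := \<psi>0)) k)) / real (K + 1)"

definition p_estimate :: "'z \<Rightarrow> (nat \<Rightarrow> 'zeta) \<Rightarrow> real" where
  "p_estimate z \<zeta>s = (\<Sum>l\<in>{1..L}. p z (\<zeta>s l) / rho z (\<zeta>s l)) / real L"

definition joint_density :: "'z \<times> 'psi \<times> (nat \<Rightarrow> 'psi) \<times> (nat \<Rightarrow> 'zeta) \<Rightarrow> ennreal" where
  "joint_density = (\<lambda>(z, \<psi>0, \<psi>s, \<zeta>s). ennreal (q z \<psi>0 * (\<Prod>k\<in>{1..K}. tau z (\<psi>s k))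
                                              * (\<Prod>l\<in>{1..L}. rho z (\<zeta>s l))))"

abbreviation "joint \<equiv> density \<Omega> joint_density"

lemma sigma_finite_MPs: "sigma_finite_measure MPs"
  and sigma_finite_MRs: "sigma_finite_measure MRs"
  using sfP sfR by (auto simp: product_sigma_finite_def intro!: product_sigma_finite.sigma_finite)

lemma q_section_measurable[measurable]: "z \<in> space MZ \<Longrightarrow> q z \<in> borel_measurable MP"
  and tau_section_measurable[measurable]: "z \<in> space MZ \<Longrightarrow> tau z \<in> borel_measurable MP"
  and p_section_measurable[measurable]: "z \<in> space MZ \<Longrightarrow> p z \<in> borel_measurable MR"
  and rho_section_measurable[measurable]: "z \<in> space MZ \<Longrightarrow> rho z \<in> borel_measurable MR"
  by (simp_all add: measurable_Pair2')

lemma q_estimate_split: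
  "q_estimate z \<psi>0 \<psi>s = (q z \<psi>0 / tau z \<psi>0 + (\<Sum>k\<in>{1..K}. q z (\<psi>s k) / tau z (\<psi>s k))) / real (K + 1)"
proof -
  have "{0..K} = insert 0 {1..K}"
    by auto
  then show ?thesis
    unfolding q_estimate_def by (simp add: sum.insert)
qed

lemma q_estimate_measurable[measurable (raw)]:
  assumes [measurable]: "f \<in> measurable M MZ" "g \<in> measurable M MP" "h \<in> measurable M MPs"
  shows "(\<lambda>x. q_estimate (f x) (g x) (h x)) \<in> borel_measurable M"
  unfolding q_estimate_split by measurable

lemma p_estimate_measurable[measurable (raw)]:
  assumes [measurable]: "f \<in> measurable M MZ" "h \<in> measurable M MRs"
  shows "(\<lambda>x. p_estimate (f x) (h x)) \<in> borel_measurable M"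
  unfolding p_estimate_def by measurable

lemma q_marginal_measurable[measurable]: "q_marginal \<in> borel_measurable MZ"
  unfolding q_marginal_def
  by (rule sigma_finite_measure.borel_measurable_nn_integral[OF sfP]) measurable

lemma p_marginal_measurable[measurable]: "p_marginal \<in> borel_measurable MZ"
  unfolding p_marginal_def
  by (rule sigma_finite_measure.borel_measurable_nn_integral[OF sfR]) measurable

lemma joint_density_measurable[measurable]: "joint_density \<in> borel_measurable \<Omega>"
  unfolding joint_density_def by measurable

lemma nn_integral_q_marginal: "(\<integral>\<^sup>+z. q_marginal z \<partial>MZ) = 1"
  using sigma_finite_measure.nn_integral_fst[OF sfP, of "\<lambda>w. ennreal (q (fst w) (snd w))" MZ] q_norm
  by (simp add: q_marginal_def)

lemma nn_integral_p_marginal: "(\<integral>\<^sup>+z. p_marginal z \<partial>MZ) = 1"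
  using sigma_finite_measure.nn_integral_fst[OF sfR, of "\<lambda>w. ennreal (p (fst w) (snd w))" MZ] p_norm
  by (simp add: p_marginal_def)

lemma nn_integral_joint:
  assumes [measurable]: "H \<in> borel_measurable \<Omega>"
  shows "integral\<^sup>N joint H = (\<integral>\<^sup>+z. \<integral>\<^sup>+\<psi>0. \<integral>\<^sup>+\<psi>s. \<integral>\<^sup>+\<zeta>s.
           joint_density (z, \<psi>0, \<psi>s, \<zeta>s) * H (z, \<psi>0, \<psi>s, \<zeta>s) \<partial>MRs \<partial>MPs \<partial>MP \<partial>MZ)"
proof -
  have sf_MPs_MRs: "sigma_finite_measure (MPs \<Otimes>\<^sub>M MRs)"
    and sf_MP_MPs_MRs: "sigma_finite_measure (MP \<Otimes>\<^sub>M MPs \<Otimes>\<^sub>M MRs)"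
    by (intro sfP sigma_finite_pair_measure sigma_finite_MPs sigma_finite_MRs)+
  have "integral\<^sup>N joint H = (\<integral>\<^sup>+\<omega>. joint_density \<omega> * H \<omega> \<partial>\<Omega>)"
    by (rule nn_integral_density) measurable
  also have "\<dots> = (\<integral>\<^sup>+z. \<integral>\<^sup>+w. joint_density (z, w) * H (z, w) \<partial>(MP \<Otimes>\<^sub>M MPs \<Otimes>\<^sub>M MRs) \<partial>MZ)"
    by (rule sigma_finite_measure.nn_integral_fst[OF sf_MP_MPs_MRs, symmetric]) measurable
  also have "\<dots> = (\<integral>\<^sup>+z. \<integral>\<^sup>+\<psi>0. \<integral>\<^sup>+w. joint_density (z, \<psi>0, w) * H (z, \<psi>0, w) \<partial>(MPs \<Otimes>\<^sub>M MRs) \<partial>MP \<partial>MZ)"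
    by (intro nn_integral_cong sigma_finite_measure.nn_integral_fst[OF sf_MPs_MRs, symmetric]) measurable
  also have "\<dots> = (\<integral>\<^sup>+z. \<integral>\<^sup>+\<psi>0. \<integral>\<^sup>+\<psi>s. \<integral>\<^sup>+\<zeta>s.
           joint_density (z, \<psi>0, \<psi>s, \<zeta>s) * H (z, \<psi>0, \<psi>s, \<zeta>s) \<partial>MRs \<partial>MPs \<partial>MP \<partial>MZ)"
    by (intro nn_integral_cong sigma_finite_measure.nn_integral_fst[OF sigma_finite_MRs, symmetric]) measurable
  finally show ?thesis .
qed

lemma nn_integral_joint_factor:
  assumes [measurable]: "F \<in> borel_measurable (MZ \<Otimes>\<^sub>M MP \<Otimes>\<^sub>M MPs)" "G \<in> borel_measurable (MZ \<Otimes>\<^sub>M MRs)"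
  shows "(\<integral>\<^sup>+(z, \<psi>0, \<psi>s, \<zeta>s). F (z, \<psi>0, \<psi>s) * G (z, \<zeta>s) \<partial>joint)
    = (\<integral>\<^sup>+z. (\<integral>\<^sup>+\<psi>0. \<integral>\<^sup>+\<psi>s. ennreal (q z \<psi>0 * (\<Prod>k\<in>{1..K}. tau z (\<psi>s k))) * F (z, \<psi>0, \<psi>s) \<partial>MPs \<partial>MP)
             * (\<integral>\<^sup>+\<zeta>s. ennreal (\<Prod>l\<in>{1..L}. rho z (\<zeta>s l)) * G (z, \<zeta>s) \<partial>MRs) \<partial>MZ)"
    (is "_ = (\<integral>\<^sup>+z. ?Q z * ?R z \<partial>MZ)")
proof -
  have density_split: "joint_density (z, \<psi>0, \<psi>s, \<zeta>s)
      = ennreal (q z \<psi>0 * (\<Prod>k\<in>{1..K}. tau z (\<psi>s k))) * ennreal (\<Prod>l\<in>{1..L}. rho z (\<zeta>s l))"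
    for z \<psi>0 \<psi>s \<zeta>s
    by (simp add: joint_density_def ennreal_mult q_nonneg tau_nonneg rho_nonneg prod_nonneg)
  have "(\<integral>\<^sup>+(z, \<psi>0, \<psi>s, \<zeta>s). F (z, \<psi>0, \<psi>s) * G (z, \<zeta>s) \<partial>joint)
      = (\<integral>\<^sup>+z. \<integral>\<^sup>+\<psi>0. \<integral>\<^sup>+\<psi>s. \<integral>\<^sup>+\<zeta>s. (ennreal (q z \<psi>0 * (\<Prod>k\<in>{1..K}. tau z (\<psi>s k))) * F (z, \<psi>0, \<psi>s))
           * (ennreal (\<Prod>l\<in>{1..L}. rho z (\<zeta>s l)) * G (z, \<zeta>s)) \<partial>MRs \<partial>MPs \<partial>MP \<partial>MZ)"
    by (subst nn_integral_joint) (measurable, simp add: density_split ac_simps)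
  also have "\<dots> = (\<integral>\<^sup>+z. ?Q z * ?R z \<partial>MZ)"
  proof (rule nn_integral_cong)
    fix z assume [measurable]: "z \<in> space MZ"
    interpret MPs: sigma_finite_measure MPs
      by (rule sigma_finite_MPs)
    have "(\<integral>\<^sup>+\<psi>0. \<integral>\<^sup>+\<psi>s. \<integral>\<^sup>+\<zeta>s. (ennreal (q z \<psi>0 * (\<Prod>k\<in>{1..K}. tau z (\<psi>s k))) * F (z, \<psi>0, \<psi>s))
           * (ennreal (\<Prod>l\<in>{1..L}. rho z (\<zeta>s l)) * G (z, \<zeta>s)) \<partial>MRs \<partial>MPs \<partial>MP)
        = (\<integral>\<^sup>+\<psi>0. \<integral>\<^sup>+\<psi>s. ennreal (q z \<psi>0 * (\<Prod>k\<in>{1..K}. tau z (\<psi>s k))) * F (z, \<psi>0, \<psi>s) * ?R z \<partial>MPs \<partial>MP)"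
      by (intro nn_integral_cong nn_integral_cmult) measurable
    also have "\<dots> = (\<integral>\<^sup>+\<psi>0. (\<integral>\<^sup>+\<psi>s. ennreal (q z \<psi>0 * (\<Prod>k\<in>{1..K}. tau z (\<psi>s k))) * F (z, \<psi>0, \<psi>s) \<partial>MPs) * ?R z \<partial>MP)"
      by (intro nn_integral_cong nn_integral_multc) measurable
    also have "\<dots> = ?Q z * ?R z"
      by (rule nn_integral_multc) measurable
    finally show "(\<integral>\<^sup>+\<psi>0. \<integral>\<^sup>+\<psi>s. \<integral>\<^sup>+\<zeta>s. (ennreal (q z \<psi>0 * (\<Prod>k\<in>{1..K}. tau z (\<psi>s k))) * F (z, \<psi>0, \<psi>s))
           * (ennreal (\<Prod>l\<in>{1..L}. rho z (\<zeta>s l)) * G (z, \<zeta>s)) \<partial>MRs \<partial>MPs \<partial>MP) = ?Q z * ?R z" .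
  qed
  finally show ?thesis .
qed

lemma nn_integral_q_tau:
  assumes z[measurable]: "z \<in> space MZ"
  shows "(\<integral>\<^sup>+\<psi>0. \<integral>\<^sup>+\<psi>s. ennreal (q z \<psi>0 * (\<Prod>k\<in>{1..K}. tau z (\<psi>s k))) \<partial>MPs \<partial>MP) = q_marginal z"
proof -
  have "(\<integral>\<^sup>+\<psi>s. ennreal (q z \<psi>0 * (\<Prod>k\<in>{1..K}. tau z (\<psi>s k))) \<partial>MPs) = ennreal (q z \<psi>0)" for \<psi>0
  proof -
    have "(\<integral>\<^sup>+\<psi>s. ennreal (q z \<psi>0 * (\<Prod>k\<in>{1..K}. tau z (\<psi>s k))) \<partial>MPs)
        = ennreal (q z \<psi>0) * (\<integral>\<^sup>+\<psi>s. ennreal (\<Prod>k\<in>{1..K}. tau z (\<psi>s k)) \<partial>MPs)"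
      by (simp add: ennreal_mult q_nonneg tau_nonneg prod_nonneg nn_integral_cmult)
    also have "(\<integral>\<^sup>+\<psi>s. ennreal (\<Prod>k\<in>{1..K}. tau z (\<psi>s k)) \<partial>MPs) = 1"
      using tau_nonneg tau_norm[OF z] by (intro nn_integral_PiM_prod_density sfP) auto
    finally show ?thesis
      by simp
  qed
  then show ?thesis
    by (simp add: q_marginal_def)
qed

lemma nn_integral_q_tau_div_q_estimate_le:
  assumes z[measurable]: "z \<in> space MZ"
  shows "(\<integral>\<^sup>+\<psi>0. \<integral>\<^sup>+\<psi>s. ennreal (q z \<psi>0 * (\<Prod>k\<in>{1..K}. tau z (\<psi>s k))) * ennreal (1 / q_estimate z \<psi>0 \<psi>s)
    \<partial>MPs \<partial>MP) \<le> 1"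
proof -
  interpret product_sigma_finite "\<lambda>_. MP"
    using sfP by (simp add: product_sigma_finite_def)
  define f where "f x = ennreal (q z (x 0) * (\<Prod>j\<in>{0..K} - {0}. tau z (x j))
    / ((\<Sum>j\<in>{0..K}. q z (x j) / tau z (x j)) / card {0..K}))" for x
  have K_insert: "insert 0 {1..K} = {0..K}"
    by auto
  have [measurable]: "f \<in> borel_measurable (PiM {0..K} (\<lambda>_. MP))"
    unfolding f_def by measurable
  have "f (\<psi>s(0 := \<psi>0))
      = ennreal (q z \<psi>0 * (\<Prod>k\<in>{1..K}. tau z (\<psi>s k))) * ennreal (1 / q_estimate z \<psi>0 \<psi>s)" for \<psi>0 \<psi>s
  proof -
    have "{0..K} - {0} = {1..K}"
      by auto
    moreover have "(\<Prod>k\<in>{1..K}. tau z ((\<psi>s(0 := \<psi>0)) k)) = (\<Prod>k\<in>{1..K}. tau z (\<psi>s k))"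
      by (rule prod.cong) auto
    ultimately have "f (\<psi>s(0 := \<psi>0)) = ennreal (q z \<psi>0 * (\<Prod>k\<in>{1..K}. tau z (\<psi>s k)) / q_estimate z \<psi>0 \<psi>s)"
      by (simp add: f_def q_estimate_def)
    also have "\<dots> = ennreal (q z \<psi>0 * (\<Prod>k\<in>{1..K}. tau z (\<psi>s k))) * ennreal (1 / q_estimate z \<psi>0 \<psi>s)"
      using q_nonneg tau_nonneg
      by (subst ennreal_divide_eq_one_divide_mult) (simp_all add: prod_nonneg mult.commute)
    finally show ?thesis .
  qed
  then have "(\<integral>\<^sup>+\<psi>0. \<integral>\<^sup>+\<psi>s. ennreal (q z \<psi>0 * (\<Prod>k\<in>{1..K}. tau z (\<psi>s k))) * ennreal (1 / q_estimate z \<psi>0 \<psi>s)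
      \<partial>MPs \<partial>MP) = integral\<^sup>N (PiM {0..K} (\<lambda>_. MP)) f"
    using product_nn_integral_insert_rev[of "{1..K}" 0 f, unfolded K_insert] by simp
  also have "\<dots> \<le> 1"
    unfolding f_def using sfP tau_nonneg tau_norm[OF z] q_nonneg tau_supp[OF z]
    by (intro nn_integral_PiM_self_normalized_le) auto
  finally show ?thesis .
qed

lemma nn_integral_rho_p_estimate_le:
  assumes z[measurable]: "z \<in> space MZ"
  shows "(\<integral>\<^sup>+\<zeta>s. ennreal (\<Prod>l\<in>{1..L}. rho z (\<zeta>s l)) * ennreal (p_estimate z \<zeta>s) \<partial>MRs) \<le> p_marginal z"
  unfolding p_estimate_def p_marginal_def using nn_integral_PiM_importance_average_le[of MR "{1..L}" "rho z" "p z"]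
  using sfR L_pos rho_nonneg rho_norm[OF z] p_nonneg by simp

lemma nn_integral_rho_mult:
  assumes z[measurable]: "z \<in> space MZ"
  shows "(\<integral>\<^sup>+\<zeta>s. ennreal (\<Prod>l\<in>{1..L}. rho z (\<zeta>s l)) * c \<partial>MRs) = c"
proof -
  have "(\<integral>\<^sup>+\<zeta>s. ennreal (\<Prod>l\<in>{1..L}. rho z (\<zeta>s l)) * c \<partial>MRs) = (\<integral>\<^sup>+\<zeta>s. ennreal (\<Prod>l\<in>{1..L}. rho z (\<zeta>s l)) \<partial>MRs) * c"
    by (rule nn_integral_multc) measurable
  also have "(\<integral>\<^sup>+\<zeta>s. ennreal (\<Prod>l\<in>{1..L}. rho z (\<zeta>s l)) \<partial>MRs) = 1"
    using sfR rho_nonneg rho_norm[OF z] by (intro nn_integral_PiM_prod_density) auto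
  finally show ?thesis
    by simp
qed

lemma nn_integral_joint_fst:
  assumes [measurable]: "h \<in> borel_measurable MZ"
  shows "(\<integral>\<^sup>+\<omega>. h (fst \<omega>) \<partial>joint) = (\<integral>\<^sup>+z. q_marginal z * h z \<partial>MZ)"
proof -
  have "(\<integral>\<^sup>+\<omega>. h (fst \<omega>) \<partial>joint)
      = (\<integral>\<^sup>+z. (\<integral>\<^sup>+\<psi>0. \<integral>\<^sup>+\<psi>s. ennreal (q z \<psi>0 * (\<Prod>k\<in>{1..K}. tau z (\<psi>s k))) * 1 \<partial>MPs \<partial>MP)
             * (\<integral>\<^sup>+\<zeta>s. ennreal (\<Prod>l\<in>{1..L}. rho z (\<zeta>s l)) * h z \<partial>MRs) \<partial>MZ)"
    using nn_integral_joint_factor[of "\<lambda>_. 1" "\<lambda>(z, _). h z"] by (simp add: case_prod_beta')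
  also have "\<dots> = (\<integral>\<^sup>+z. q_marginal z * h z \<partial>MZ)"
  proof (rule nn_integral_cong)
    fix z assume z: "z \<in> space MZ"
    show "(\<integral>\<^sup>+\<psi>0. \<integral>\<^sup>+\<psi>s. ennreal (q z \<psi>0 * (\<Prod>k\<in>{1..K}. tau z (\<psi>s k))) * 1 \<partial>MPs \<partial>MP)
        * (\<integral>\<^sup>+\<zeta>s. ennreal (\<Prod>l\<in>{1..L}. rho z (\<zeta>s l)) * h z \<partial>MRs) = q_marginal z * h z"
      using nn_integral_q_tau[OF z] nn_integral_rho_mult[OF z] by simp
  qed
  finally show ?thesis .
qed

lemma distr_joint_fst: "distr joint MZ fst = density MZ (\<lambda>z. ennreal (enn2real (q_marginal z)))"
proof (rule measure_eqI)
  fix A assume "A \<in> sets (distr joint MZ fst)"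
  then have A[measurable]: "A \<in> sets MZ"
    by simp
  have "AE z in MZ. q_marginal z \<noteq> \<infinity>"
    using nn_integral_q_marginal by (intro nn_integral_PInf_AE) auto
  then have q_marginal_finite: "(\<integral>\<^sup>+z. q_marginal z * indicator A z \<partial>MZ) = (\<integral>\<^sup>+z. ennreal (enn2real (q_marginal z)) * indicator A z \<partial>MZ)"
    by (intro nn_integral_cong_AE) (auto simp: less_top)
  have "emeasure (distr joint MZ fst) A = emeasure joint (fst -` A \<inter> space joint)"
    by (rule emeasure_distr) measurable
  also have "\<dots> = (\<integral>\<^sup>+\<omega>. indicator (fst -` A \<inter> space joint) \<omega> \<partial>joint)"
    by (rule nn_integral_indicator[symmetric]) measurable
  also have "\<dots> = (\<integral>\<^sup>+\<omega>. indicator A (fst \<omega>) \<partial>joint)"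
    by (rule nn_integral_cong) (simp split: split_indicator)
  also have "\<dots> = emeasure (density MZ (\<lambda>z. ennreal (enn2real (q_marginal z)))) A"
    using nn_integral_joint_fst[OF borel_measurable_indicator[OF A]] q_marginal_finite A
    by (simp add: emeasure_density)
  finally show "emeasure (distr joint MZ fst) A = emeasure (density MZ (\<lambda>z. ennreal (enn2real (q_marginal z)))) A" .
qed simp

lemma prob_space_joint: "prob_space joint"
proof
  have "emeasure joint (space joint) = (\<integral>\<^sup>+\<omega>. 1 \<partial>joint)"
    by simp
  also have "\<dots> = 1"
    using nn_integral_joint_fst[of "\<lambda>_. 1"] by (simp add: nn_integral_q_marginal)
  finally show "emeasure joint (space joint) = 1" .
qed

lemma AE_joint_q_estimate_pos: "AE \<omega> in joint. 0 < q_estimate (fst \<omega>) (fst (snd \<omega>)) (fst (snd (snd \<omega>)))"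
proof (subst AE_density, measurable, rule AE_I2, safe)
  fix z \<psi>0 \<psi>s \<zeta>s assume \<omega>: "(z, \<psi>0, \<psi>s, \<zeta>s) \<in> space \<Omega>" and "0 < joint_density (z, \<psi>0, \<psi>s, \<zeta>s)"
  then have "q z \<psi>0 \<noteq> 0"
    by (auto simp: joint_density_def)
  moreover have "z \<in> space MZ" "\<psi>0 \<in> space MP"
    using \<omega> by (auto simp: space_pair_measure)
  ultimately have "0 < q z \<psi>0 / tau z \<psi>0"
    using tau_supp q_nonneg[of z \<psi>0] tau_nonneg[of z \<psi>0] by (force intro: divide_pos_pos)
  moreover have "0 \<le> (\<Sum>k\<in>{1..K}. q z (\<psi>s k) / tau z (\<psi>s k))"
    by (intro sum_nonneg divide_nonneg_nonneg q_nonneg tau_nonneg)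
  ultimately show "0 < q_estimate (fst (z, \<psi>0, \<psi>s, \<zeta>s)) (fst (snd (z, \<psi>0, \<psi>s, \<zeta>s))) (fst (snd (snd (z, \<psi>0, \<psi>s, \<zeta>s))))"
    by (simp add: q_estimate_split)
qed

lemma AE_joint_q_marginal_pos: "AE \<omega> in joint. 0 < enn2real (q_marginal (fst \<omega>))"
proof -
  have "AE z in distr joint MZ fst. 0 < enn2real (q_marginal z)"
    unfolding distr_joint_fst by (subst AE_density) (auto intro!: AE_I2)
  then show ?thesis
    by (subst (asm) AE_distr_iff) measurable
qed


lemma p_estimate_nonneg: "0 \<le> p_estimate z \<zeta>s"
  unfolding p_estimate_def by (intro divide_nonneg_nonneg sum_nonneg p_nonneg rho_nonneg) simp_all

lemma nn_integral_joint_q_marginal_div_q_estimate_le: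
  "(\<integral>\<^sup>+(z, \<psi>0, \<psi>s, \<zeta>s). ennreal (enn2real (q_marginal z) / q_estimate z \<psi>0 \<psi>s) \<partial>joint) \<le> 1"
proof -
  have "(\<lambda>(z, \<psi>0, \<psi>s). ennreal (1 / q_estimate z \<psi>0 \<psi>s)) \<in> borel_measurable (MZ \<Otimes>\<^sub>M MP \<Otimes>\<^sub>M MPs)"
    "(\<lambda>(z, \<zeta>s). ennreal (enn2real (q_marginal z))) \<in> borel_measurable (MZ \<Otimes>\<^sub>M MRs)"
    by measurable
  from nn_integral_joint_factor[OF this]
  have "(\<integral>\<^sup>+(z, \<psi>0, \<psi>s, \<zeta>s). ennreal (enn2real (q_marginal z) / q_estimate z \<psi>0 \<psi>s) \<partial>joint)
      = (\<integral>\<^sup>+z. (\<integral>\<^sup>+\<psi>0. \<integral>\<^sup>+\<psi>s. ennreal (q z \<psi>0 * (\<Prod>k\<in>{1..K}. tau z (\<psi>s k)))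
                  * ennreal (1 / q_estimate z \<psi>0 \<psi>s) \<partial>MPs \<partial>MP)
             * (\<integral>\<^sup>+\<zeta>s. ennreal (\<Prod>l\<in>{1..L}. rho z (\<zeta>s l)) * ennreal (enn2real (q_marginal z)) \<partial>MRs) \<partial>MZ)"
    by (simp add: ennreal_divide_eq_one_divide_mult[OF enn2real_nonneg])
  also have "\<dots> \<le> (\<integral>\<^sup>+z. 1 * q_marginal z \<partial>MZ)"
  proof (intro nn_integral_mono mult_mono)
    fix z assume z: "z \<in> space MZ"
    show "(\<integral>\<^sup>+\<psi>0. \<integral>\<^sup>+\<psi>s. ennreal (q z \<psi>0 * (\<Prod>k\<in>{1..K}. tau z (\<psi>s k)))
        * ennreal (1 / q_estimate z \<psi>0 \<psi>s) \<partial>MPs \<partial>MP) \<le> 1"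
      using z by (rule nn_integral_q_tau_div_q_estimate_le)
    show "(\<integral>\<^sup>+\<zeta>s. ennreal (\<Prod>l\<in>{1..L}. rho z (\<zeta>s l)) * ennreal (enn2real (q_marginal z)) \<partial>MRs) \<le> q_marginal z"
      using nn_integral_rho_mult[OF z] by (simp add: ennreal_enn2real_if)
  qed simp_all
  finally show ?thesis
    by (simp add: nn_integral_q_marginal)
qed

lemma nn_integral_joint_p_estimate_div_q_estimate_le:
  "(\<integral>\<^sup>+(z, \<psi>0, \<psi>s, \<zeta>s). ennreal (p_estimate z \<zeta>s / q_estimate z \<psi>0 \<psi>s) \<partial>joint) \<le> 1"
proof -
  have "(\<lambda>(z, \<psi>0, \<psi>s). ennreal (1 / q_estimate z \<psi>0 \<psi>s)) \<in> borel_measurable (MZ \<Otimes>\<^sub>M MP \<Otimes>\<^sub>M MPs)"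
    "(\<lambda>(z, \<zeta>s). ennreal (p_estimate z \<zeta>s)) \<in> borel_measurable (MZ \<Otimes>\<^sub>M MRs)"
    by measurable
  from nn_integral_joint_factor[OF this] have "(\<integral>\<^sup>+(z, \<psi>0, \<psi>s, \<zeta>s). ennreal (p_estimate z \<zeta>s / q_estimate z \<psi>0 \<psi>s) \<partial>joint)
      = (\<integral>\<^sup>+z. (\<integral>\<^sup>+\<psi>0. \<integral>\<^sup>+\<psi>s. ennreal (q z \<psi>0 * (\<Prod>k\<in>{1..K}. tau z (\<psi>s k)))
                  * ennreal (1 / q_estimate z \<psi>0 \<psi>s) \<partial>MPs \<partial>MP)
             * (\<integral>\<^sup>+\<zeta>s. ennreal (\<Prod>l\<in>{1..L}. rho z (\<zeta>s l)) * ennreal (p_estimate z \<zeta>s) \<partial>MRs) \<partial>MZ)"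
    by (simp add: ennreal_divide_eq_one_divide_mult[OF p_estimate_nonneg])
  also have "\<dots> \<le> (\<integral>\<^sup>+z. 1 * p_marginal z \<partial>MZ)"
  proof (intro nn_integral_mono mult_mono)
    fix z assume z: "z \<in> space MZ"
    show "(\<integral>\<^sup>+\<psi>0. \<integral>\<^sup>+\<psi>s. ennreal (q z \<psi>0 * (\<Prod>k\<in>{1..K}. tau z (\<psi>s k)))
        * ennreal (1 / q_estimate z \<psi>0 \<psi>s) \<partial>MPs \<partial>MP) \<le> 1"
      using z by (rule nn_integral_q_tau_div_q_estimate_le)
    show "(\<integral>\<^sup>+\<zeta>s. ennreal (\<Prod>l\<in>{1..L}. rho z (\<zeta>s l)) * ennreal (p_estimate z \<zeta>s) \<partial>MRs) \<le> p_marginal z"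
      using z by (rule nn_integral_rho_p_estimate_le)
  qed simp_all
  finally show ?thesis
    by (simp add: nn_integral_p_marginal)
qed

lemma nn_integral_joint_p_estimate_div_p_marginal_le:
  "(\<integral>\<^sup>+(z, \<psi>0, \<psi>s, \<zeta>s). ennreal (p_estimate z \<zeta>s) / ennreal (enn2real (p_marginal z)) \<partial>joint) \<le> 1"
proof -
  have "(\<lambda>(z, \<zeta>s). ennreal (p_estimate z \<zeta>s) / ennreal (enn2real (p_marginal z))) \<in> borel_measurable (MZ \<Otimes>\<^sub>M MRs)"
    by measurable
  from nn_integral_joint_factor[OF _ this, of "\<lambda>_. 1"]
  have "(\<integral>\<^sup>+(z, \<psi>0, \<psi>s, \<zeta>s). ennreal (p_estimate z \<zeta>s) / ennreal (enn2real (p_marginal z)) \<partial>joint)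
      = (\<integral>\<^sup>+z. (\<integral>\<^sup>+\<psi>0. \<integral>\<^sup>+\<psi>s. ennreal (q z \<psi>0 * (\<Prod>k\<in>{1..K}. tau z (\<psi>s k))) * 1 \<partial>MPs \<partial>MP)
             * (\<integral>\<^sup>+\<zeta>s. ennreal (\<Prod>l\<in>{1..L}. rho z (\<zeta>s l)) * (ennreal (p_estimate z \<zeta>s) / ennreal (enn2real (p_marginal z))) \<partial>MRs) \<partial>MZ)"
    by (simp add: case_prod_beta')
  also have "\<dots> \<le> (\<integral>\<^sup>+z. q_marginal z * (p_marginal z / ennreal (enn2real (p_marginal z))) \<partial>MZ)"
  proof (intro nn_integral_mono mult_mono)
    fix z assume z[measurable]: "z \<in> space MZ"
    show "(\<integral>\<^sup>+\<psi>0. \<integral>\<^sup>+\<psi>s. ennreal (q z \<psi>0 * (\<Prod>k\<in>{1..K}. tau z (\<psi>s k))) * 1 \<partial>MPs \<partial>MP) \<le> q_marginal z"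
      using nn_integral_q_tau[OF z] by simp
    have "(\<integral>\<^sup>+\<zeta>s. ennreal (\<Prod>l\<in>{1..L}. rho z (\<zeta>s l)) * (ennreal (p_estimate z \<zeta>s) / ennreal (enn2real (p_marginal z))) \<partial>MRs)
        = (\<integral>\<^sup>+\<zeta>s. ennreal (\<Prod>l\<in>{1..L}. rho z (\<zeta>s l)) * ennreal (p_estimate z \<zeta>s) \<partial>MRs) / ennreal (enn2real (p_marginal z))"
      unfolding ennreal_times_divide by (rule nn_integral_divide) measurable
    also have "\<dots> \<le> p_marginal z / ennreal (enn2real (p_marginal z))"
      by (intro divide_right_mono_ennreal nn_integral_rho_p_estimate_le z)
    finally show "(\<integral>\<^sup>+\<zeta>s. ennreal (\<Prod>l\<in>{1..L}. rho z (\<zeta>s l)) * (ennreal (p_estimate z \<zeta>s) / ennreal (enn2real (p_marginal z))) \<partial>MRs)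
        \<le> p_marginal z / ennreal (enn2real (p_marginal z))" .
  qed simp_all
  also have "\<dots> \<le> (\<integral>\<^sup>+z. q_marginal z \<partial>MZ)"
  proof (intro nn_integral_mono_AE)
    have "AE z in MZ. p_marginal z \<noteq> \<infinity>"
      using nn_integral_p_marginal by (intro nn_integral_PInf_AE) auto
    then show "AE z in MZ. q_marginal z * (p_marginal z / ennreal (enn2real (p_marginal z))) \<le> q_marginal z"
    proof eventually_elim
      case (elim z)
      then have "p_marginal z / ennreal (enn2real (p_marginal z)) \<le> 1"
        by (cases "p_marginal z = 0") (auto simp: less_top)
      then show ?case
        using mult_left_mono[of _ 1 "q_marginal z"] by simp
    qed
  qed
  finally show ?thesis
    by (simp add: nn_integral_q_marginal)
qed

lemma nn_integral_KL_integrand_neg_le: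
  "(\<integral>\<^sup>+z. e2ennreal (- elog_ratio (enn2real (q_marginal z)) (enn2real (p_marginal z)))
      \<partial>density MZ (\<lambda>z. ennreal (enn2real (q_marginal z)))) \<le> 1"
proof -
  have "(\<integral>\<^sup>+z. e2ennreal (- elog_ratio (enn2real (q_marginal z)) (enn2real (p_marginal z)))
      \<partial>density MZ (\<lambda>z. ennreal (enn2real (q_marginal z))))
    = (\<integral>\<^sup>+z. ennreal (enn2real (q_marginal z)) * e2ennreal (- elog_ratio (enn2real (q_marginal z)) (enn2real (p_marginal z))) \<partial>MZ)"
    unfolding elog_ratio_def by (rule nn_integral_density) measurable
  also have "\<dots> \<le> (\<integral>\<^sup>+z. p_marginal z \<partial>MZ)"
    by (intro nn_integral_mono order_trans[OF mult_e2ennreal_neg_elog_ratio_le]) (simp_all add: ennreal_enn2real_if)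
  finally show ?thesis
    by (simp add: nn_integral_p_marginal)
qed

lemma nn_integral_joint_neg_log_ratio_le:
  "(\<integral>\<^sup>+(z, \<psi>0, \<psi>s, \<zeta>s). e2ennreal (- elog_ratio (q_estimate z \<psi>0 \<psi>s) (p_estimate z \<zeta>s)) \<partial>joint) \<le> 1"
proof -
  have "(\<integral>\<^sup>+(z, \<psi>0, \<psi>s, \<zeta>s). e2ennreal (- elog_ratio (q_estimate z \<psi>0 \<psi>s) (p_estimate z \<zeta>s)) \<partial>joint)
      \<le> (\<integral>\<^sup>+(z, \<psi>0, \<psi>s, \<zeta>s). ennreal (p_estimate z \<zeta>s / q_estimate z \<psi>0 \<psi>s) \<partial>joint)"
    using AE_joint_q_estimate_pos
    by (intro nn_integral_mono_AE, eventually_elim)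
      (auto split: prod.splits intro!: e2ennreal_neg_elog_ratio_le p_estimate_nonneg)
  also have "\<dots> \<le> 1"
    by (rule nn_integral_joint_p_estimate_div_q_estimate_le)
  finally show ?thesis .
qed

lemma KL_marginal_le_expected_log_ratio:
  "KL_div MZ (\<lambda>z. enn2real (q_marginal z)) (\<lambda>z. enn2real (p_marginal z))
    \<le> ext_expectation joint (\<lambda>(z, \<psi>0, \<psi>s, \<zeta>s). elog_ratio (q_estimate z \<psi>0 \<psi>s) (p_estimate z \<zeta>s))"
proof -
  define f where "f = (\<lambda>(z, \<psi>0, \<psi>s, \<zeta>s). elog_ratio (q_estimate z \<psi>0 \<psi>s) (p_estimate z \<zeta>s))"
  define g where "g z = elog_ratio (enn2real (q_marginal z)) (enn2real (p_marginal z))" for z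
  \<comment> \<open>\<open>U1 + U2 = Q/A + B/P\<close> is the slack in \<open>elog_ratio_diff_slack\<close>.\<close>
  define U1 where "U1 = (\<lambda>(z, \<psi>0, \<psi>s, \<zeta>s :: nat \<Rightarrow> 'zeta). ennreal (enn2real (q_marginal z) / q_estimate z \<psi>0 \<psi>s))"
  define U2 where "U2 = (\<lambda>(z, \<psi>0 :: 'psi, \<psi>s :: nat \<Rightarrow> 'psi, \<zeta>s). ennreal (p_estimate z \<zeta>s) / ennreal (enn2real (p_marginal z)))"
  have [measurable]: "f \<in> borel_measurable \<Omega>" "g \<in> borel_measurable MZ"
    "U1 \<in> borel_measurable \<Omega>" "U2 \<in> borel_measurable \<Omega>"
    unfolding f_def g_def U1_def U2_def elog_ratio_def by measurable
  have "KL_div MZ (\<lambda>z. enn2real (q_marginal z)) (\<lambda>z. enn2real (p_marginal z)) = ext_expectation joint (\<lambda>\<omega>. g (fst \<omega>))"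
    unfolding KL_div_def g_def[symmetric] distr_joint_fst[symmetric] by (rule ext_expectation_distr) measurable
  also have "\<dots> \<le> ext_expectation joint f"
  proof (rule ext_expectation_le_of_slack[where U = "\<lambda>\<omega>. U1 \<omega> + U2 \<omega>" and W = "\<lambda>_. 2"])
    show "AE \<omega> in joint. e2ennreal (g (fst \<omega>)) + e2ennreal (- f \<omega>) + 2
        \<le> e2ennreal (f \<omega>) + e2ennreal (- g (fst \<omega>)) + (U1 \<omega> + U2 \<omega>)"
      using AE_joint_q_estimate_pos AE_joint_q_marginal_pos
      by eventually_elim
        (auto simp: f_def g_def U1_def U2_def split: prod.splits intro!: elog_ratio_diff_slack p_estimate_nonneg)
    have "(\<integral>\<^sup>+\<omega>. U1 \<omega> + U2 \<omega> \<partial>joint) = integral\<^sup>N joint U1 + integral\<^sup>N joint U2"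
      by (rule nn_integral_add) measurable
    also have "\<dots> \<le> 1 + 1"
      using nn_integral_joint_q_marginal_div_q_estimate_le nn_integral_joint_p_estimate_div_p_marginal_le
      unfolding U1_def U2_def by (rule add_mono)
    also have "(1 + 1 :: ennreal) = (\<integral>\<^sup>+\<omega>. 2 \<partial>joint)"
      using prob_space.emeasure_space_1[OF prob_space_joint] by simp
    finally show "(\<integral>\<^sup>+\<omega>. U1 \<omega> + U2 \<omega> \<partial>joint) \<le> (\<integral>\<^sup>+\<omega>. 2 \<partial>joint)" .
    then show "(\<integral>\<^sup>+\<omega>. 2 \<partial>joint) \<noteq> \<infinity>"
      using prob_space.emeasure_space_1[OF prob_space_joint] by simp
    show "(\<integral>\<^sup>+\<omega>. e2ennreal (- f \<omega>) \<partial>joint) \<noteq> \<infinity>"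
      using nn_integral_joint_neg_log_ratio_le by (auto simp: f_def case_prod_beta' top_unique)
    have "(\<integral>\<^sup>+\<omega>. e2ennreal (- g (fst \<omega>)) \<partial>joint)
        = (\<integral>\<^sup>+z. e2ennreal (- g z) \<partial>density MZ (\<lambda>z. ennreal (enn2real (q_marginal z))))"
      unfolding distr_joint_fst[symmetric] by (rule nn_integral_distr[symmetric]) measurable
    then show "(\<integral>\<^sup>+\<omega>. e2ennreal (- g (fst \<omega>)) \<partial>joint) \<noteq> \<infinity>"
      using nn_integral_KL_integrand_neg_le by (auto simp: g_def top_unique)
  qed measurable
  finally show ?thesis
    unfolding f_def .
qed

end

theorem mainTheorem4:
  fixes MZ :: "'z measure" and MP :: "'psi measure" and MR :: "'zeta measure"
    and q :: "'z \<Rightarrow> 'psi \<Rightarrow> real"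
    and p :: "'z \<Rightarrow> 'zeta \<Rightarrow> real"
    and tau :: "'z \<Rightarrow> 'psi \<Rightarrow> real"
    and rho :: "'z \<Rightarrow> 'zeta \<Rightarrow> real"
    and K L :: nat
  assumes sfZ: "sigma_finite_measure MZ"
    and sfP: "sigma_finite_measure MP"
    and sfR: "sigma_finite_measure MR"
    and L_pos: "1 \<le> L"
    and q_meas: "(\<lambda>(z, \<psi>). q z \<psi>) \<in> borel_measurable (MZ \<Otimes>\<^sub>M MP)"
    and q_nonneg: "\<And>z \<psi>. 0 \<le> q z \<psi>"
    and q_norm: "(\<integral>\<^sup>+ w. ennreal (q (fst w) (snd w)) \<partial>(MZ \<Otimes>\<^sub>M MP)) = 1"
    and p_meas: "(\<lambda>(z, \<zeta>). p z \<zeta>) \<in> borel_measurable (MZ \<Otimes>\<^sub>M MR)"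
    and p_nonneg: "\<And>z \<zeta>. 0 \<le> p z \<zeta>"
    and p_norm: "(\<integral>\<^sup>+ w. ennreal (p (fst w) (snd w)) \<partial>(MZ \<Otimes>\<^sub>M MR)) = 1"
    and tau_meas: "(\<lambda>(z, \<psi>). tau z \<psi>) \<in> borel_measurable (MZ \<Otimes>\<^sub>M MP)"
    and tau_nonneg: "\<And>z \<psi>. 0 \<le> tau z \<psi>"
    and tau_norm: "\<And>z. z \<in> space MZ \<Longrightarrow> (\<integral>\<^sup>+ \<psi>. ennreal (tau z \<psi>) \<partial>MP) = 1"
    and tau_supp: "\<And>z \<psi>. z \<in> space MZ \<Longrightarrow> \<psi> \<in> space MP \<Longrightarrow> tau z \<psi> = 0 \<Longrightarrow> q z \<psi> = 0"
    and rho_meas: "(\<lambda>(z, \<zeta>). rho z \<zeta>) \<in> borel_measurable (MZ \<Otimes>\<^sub>M MR)"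
    and rho_nonneg: "\<And>z \<zeta>. 0 \<le> rho z \<zeta>"
    and rho_norm: "\<And>z. z \<in> space MZ \<Longrightarrow> (\<integral>\<^sup>+ \<zeta>. ennreal (rho z \<zeta>) \<partial>MR) = 1"
  shows "KL_div MZ (\<lambda>z. enn2real (\<integral>\<^sup>+ \<psi>. ennreal (q z \<psi>) \<partial>MP))
                   (\<lambda>z. enn2real (\<integral>\<^sup>+ \<zeta>. ennreal (p z \<zeta>) \<partial>MR))
    \<le> ext_expectation
         (density (MZ \<Otimes>\<^sub>M MP \<Otimes>\<^sub>M (\<Pi>\<^sub>M k\<in>{1..K}. MP) \<Otimes>\<^sub>M (\<Pi>\<^sub>M l\<in>{1..L}. MR))
            (\<lambda>(z, \<psi>0, \<psi>s, \<zeta>s). ennreal (q z \<psi>0 * (\<Prod>k\<in>{1..K}. tau z (\<psi>s k))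
                                              * (\<Prod>l\<in>{1..L}. rho z (\<zeta>s l)))))
         (\<lambda>(z, \<psi>0, \<psi>s, \<zeta>s).
            elog_ratio
              ((\<Sum>k\<in>{0..K}. q z ((\<psi>s(0 := \<psi>0)) k) / tau z ((\<psi>s(0 := \<psi>0)) k)) / real (K + 1))
              ((\<Sum>l\<in>{1..L}. p z (\<zeta>s l) / rho z (\<zeta>s l)) / real L))"
proof -
  interpret kl_marginal_bound MZ MP MR q p tau rho K L
    by (rule kl_marginal_bound.intro) fact+
  show ?thesis
    using KL_marginal_le_expected_log_ratio
    unfolding q_marginal_def p_marginal_def joint_density_def q_estimate_def p_estimate_def .
qed

end
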